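(* Let $\lambda$ be an infinite cardinal and $\chi$ either $2$ or an infinite cardinal, with $\chi<\lambda$. For every $S\in J_\chi[\lambda^+]$, the set $S\cap E^{\lambda^+}_{\mathrm{cf}(\lambda)}$ is nonstationary.
   Context: $E^\kappa_\theta=\{\alpha<\kappa\mid\mathrm{cf}(\alpha)=\theta\}$. For regular uncountable $\kappa$, $J_\chi[\kappa]$ is the collection of all $S\subseteq\kappa$ for which there exist a club $C\subseteq\kappa$ and functions $f_i:\kappa\to[\kappa]^{<\chi}$ ($i<\kappa$) such that for every $\alpha\in S\cap C$, every regressive $f:\alpha\to\alpha$ and every cofinal $B\subseteq\alpha$, there is $i<\alpha$ with $\sup\{\beta\in B\mid f(\beta)\in f_i(\beta)\}=\alpha$. *)

theory Defs
  imports Main "HOL-Library.Equipollence"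
begin

text \<open>Convention: ordinals below a regular cardinal kappa are modelled as the elements
of a type 'k of class wellorder whose order type is kappa. Cardinal comparisons use
equipollence.\<close>

definition initial_ord :: "'k::wellorder \<Rightarrow> bool" where
  "initial_ord a \<longleftrightarrow> (\<forall>y<a. {..<y} \<prec> {..<a})"

definition weakly_cofinal :: "'k::wellorder set \<Rightarrow> 'k \<Rightarrow> bool" where
  "weakly_cofinal B a \<longleftrightarrow> B \<subseteq> {..<a} \<and> (\<forall>g<a. \<exists>b\<in>B. g \<le> b)"

definition cof :: "'k::wellorder \<Rightarrow> 'k" where
  "cof a = (LEAST c. \<exists>B. weakly_cofinal B a \<and> B \<approx> {..<c})"

definition E_cof :: "'k::wellorder \<Rightarrow> 'k set" where
  "E_cof t = {a. cof a = t}"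

definition sup_is :: "'k::wellorder set \<Rightarrow> 'k \<Rightarrow> bool" where
  "sup_is X a \<longleftrightarrow> X \<subseteq> {..<a} \<and> (\<forall>g<a. \<exists>x\<in>X. g < x)"

definition club :: "'k::wellorder set \<Rightarrow> bool" where
  "club C \<longleftrightarrow> (\<forall>x. \<exists>c\<in>C. x < c) \<and>
     (\<forall>a. (\<exists>g. g < a) \<and> (\<forall>b<a. \<exists>c\<in>C. b < c \<and> c < a) \<longrightarrow> a \<in> C)"

definition stationary :: "'k::wellorder set \<Rightarrow> bool" where
  "stationary S \<longleftrightarrow> (\<forall>C. club C \<longrightarrow> S \<inter> C \<noteq> {})"

definition regressive_on :: "('k::wellorder \<Rightarrow> 'k) \<Rightarrow> 'k \<Rightarrow> bool" where
  "regressive_on f a \<longleftrightarrow> (\<forall>b<a. f b < a \<and> ((\<exists>g. g < b) \<longrightarrow> f b < b))"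

text \<open>The ideal J_chi[kappa], kappa being the order type of 'k.\<close>
definition J_ideal :: "'k::wellorder \<Rightarrow> 'k set set" where
  "J_ideal chi = {S. \<exists>C (F :: 'k \<Rightarrow> 'k \<Rightarrow> 'k set).
     club C \<and> (\<forall>i b. F i b \<prec> {..<chi}) \<and>
     (\<forall>a\<in>S \<inter> C. \<forall>f. regressive_on f a \<longrightarrow>
        (\<forall>B. sup_is B a \<longrightarrow> (\<exists>i<a. sup_is {b\<in>B. f b \<in> F i b} a)))}"

end

theory Submission
  imports Defs
begin

text \<open>Let \<open>\<alpha> > \<lambda>\<close> lie in the club witnessing \<open>S \<in> J\<^sub>\<chi>[\<lambda>\<^sup>+]\<close>, with \<open>cf \<alpha> = cf \<lambda> = \<theta>\<close>. Fix an
  injection \<open>h : \<alpha> \<rightarrow> \<lambda>\<close> and a cofinal sequence \<open>\<langle>\<eta>\<^sub>\<zeta> | \<zeta> < \<theta>\<rangle>\<close> in \<open>\<lambda>\<close>, and give \<open>i < \<alpha>\<close> the rank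
  \<open>r(i) < \<theta>\<close>, the least \<open>\<zeta>\<close> with \<open>h(i) \<le> \<eta>\<^sub>\<zeta>\<close>. Since \<open>\<xi> < cf \<lambda>\<close>, the \<open>\<eta>\<^sub>\<zeta>\<close> with \<open>\<zeta> < \<xi>\<close> are
  bounded below \<open>\<lambda>\<close>, so fewer than \<open>\<lambda>\<close> indices have rank below \<open>\<xi>\<close>. Along a cofinal sequence
  \<open>\<langle>d\<^sub>\<xi> | \<xi> < \<theta>\<rangle>\<close> in \<open>\<alpha>\<close>, the union of the sets \<open>f\<^sub>i(d\<^sub>\<xi>)\<close> over the indices of rank below \<open>\<xi>\<close>
  thus has size \<open>< \<lambda>\<close> (as \<open>\<chi> < \<lambda>\<close>), and a regressive \<open>f\<close> can pick \<open>f(d\<^sub>\<xi>) < d\<^sub>\<xi>\<close> outside it whenever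
  \<open>d\<^sub>\<xi> \<ge> \<lambda>\<close>. Now \<open>f(d\<^sub>\<xi>) \<in> f\<^sub>i(d\<^sub>\<xi>)\<close> forces \<open>\<xi> \<le> r(i)\<close>, and such points cannot be cofinal in \<open>\<alpha>\<close>,
  as \<open>r(i) < cf \<alpha>\<close>. So no such \<open>\<alpha>\<close> lies in \<open>S\<close>: the elements above \<open>\<lambda>\<close> of the witnessing club
  form a club missing every point of \<open>S\<close> of cofinality \<open>cf \<lambda>\<close>.\<close>

lemma UN_lepoll_Times:
  assumes "\<And>i. i \<in> A \<Longrightarrow> X i \<lesssim> Y"
  shows "(\<Union>i\<in>A. X i) \<lesssim> A \<times> Y"
proof -
  have "(\<Union>i\<in>A. X i) \<lesssim> Sigma A X"
    using Ex_inj_on_UNION_Sigma[of X A] by (simp add: lepoll_def)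
  also have "Sigma A X \<lesssim> A \<times> Y"
    using assms by (intro Sigma_lepoll_mono) auto
  finally show ?thesis .
qed

lemma Times_self_lesspoll_infinite:
  assumes "M \<prec> L" "infinite L"
  shows "M \<times> M \<prec> L"
proof (cases "finite M")
  case True
  then show ?thesis using assms(2) by (simp add: finite_lesspoll_infinite)
next
  case False
  have "M \<times> M \<approx> M"
    by (rule eqpoll_iff_card_of_ordIso[THEN iffD2, OF card_of_Times_same_infinite[OF False]])
  then show ?thesis using assms(1) by (rule eq_lesspoll_trans)
qed

lemma UN_lesspoll_initial_ord:
  fixes lam mu :: "'k::wellorder"
  assumes "initial_ord lam" "infinite {..<lam}" "mu < lam"
    and "A \<lesssim> {..<mu}" "\<And>i. i \<in> A \<Longrightarrow> X i \<lesssim> {..<mu}"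
  shows "(\<Union>i\<in>A. X i) \<prec> {..<lam}"
proof -
  have "(\<Union>i\<in>A. X i) \<lesssim> A \<times> {..<mu}"
    using assms(5) by (rule UN_lepoll_Times)
  also have "\<dots> \<lesssim> {..<mu} \<times> {..<mu}"
    using assms(4) by (rule times_lepoll_mono) simp
  also have "\<dots> \<prec> {..<lam}"
    using assms(1-3) by (intro Times_self_lesspoll_infinite) (simp_all add: initial_ord_def)
  finally show ?thesis .
qed

lemma cof_witness:
  fixes a :: "'k::wellorder"
  shows "\<exists>B. weakly_cofinal B a \<and> B \<approx> {..<cof a}"
proof -
  have "weakly_cofinal {..<a} a \<and> {..<a} \<approx> {..<a}"
    by (auto simp: weakly_cofinal_def)
  then have "\<exists>(c::'k) B. weakly_cofinal B a \<and> B \<approx> {..<c}" by blast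
  then show ?thesis unfolding cof_def by (rule LeastI_ex)
qed

lemma cof_le:
  fixes a c :: "'k::wellorder"
  assumes "weakly_cofinal B a" "B \<approx> {..<c}"
  shows "cof a \<le> c"
  unfolding cof_def using assms by (blast intro: Least_le)

lemma bounded_if_eqpoll_less_cof:
  fixes a \<xi> :: "'k::wellorder"
  assumes "X \<subseteq> {..<a}" "X \<approx> {..<\<xi>}" "\<xi> < cof a"
  shows "\<exists>\<gamma><a. \<forall>x\<in>X. x < \<gamma>"
proof (rule ccontr)
  assume "\<not> ?thesis"
  then have "weakly_cofinal X a"
    using assms(1) unfolding weakly_cofinal_def by (metis leD not_less)
  then have "cof a \<le> \<xi>" using assms(2) by (rule cof_le)
  with assms(3) show False by simp
qed

lemma initial_ord_limit:
  fixes lam y :: "'k::wellorder"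
  assumes "initial_ord lam" "infinite {..<lam}" "y < lam"
  shows "\<exists>z. y < z \<and> z < lam"
proof (rule ccontr)
  assume "\<not> ?thesis"
  then have eq: "{..<lam} = insert y {..<y}"
    using assms(3) by (auto simp: not_less order.order_iff_strict)
  then have "infinite {..<y}" using assms(2) by (metis finite_insert)
  then have "{..<lam} \<approx> {..<y}" using eq by (simp add: infinite_insert_eqpoll)
  moreover have "{..<y} \<prec> {..<lam}" using assms(1,3) by (simp add: initial_ord_def)
  ultimately show False using eq_lesspoll_trans by blast
qed

lemma cof_infinite_if_limit:
  fixes a y :: "'k::wellorder"
  assumes "y < a" and limit: "\<And>y. y < a \<Longrightarrow> \<exists>z. y < z \<and> z < a"
  shows "infinite {..<cof a}"
proof
  assume fin: "finite {..<cof a}"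
  obtain E where E: "weakly_cofinal E a" "E \<approx> {..<cof a}"
    using cof_witness by blast
  have "finite E" using E(2) fin eqpoll_finite_iff by blast
  moreover have "E \<noteq> {}" using E(1) assms(1) by (auto simp: weakly_cofinal_def)
  ultimately have "Max E < a" using E(1) Max_in by (auto simp: weakly_cofinal_def)
  then obtain z where "Max E < z" "z < a" using limit by blast
  then obtain e where "e \<in> E" "z \<le> e" using E(1) unfolding weakly_cofinal_def by blast
  with \<open>finite E\<close> \<open>Max E < z\<close> show False by (meson Max_ge leD order_le_less_trans)
qed

lemma infinite_cof_initial_ord:
  fixes lam :: "'k::wellorder"
  assumes "initial_ord lam" "infinite {..<lam}"
  shows "infinite {..<cof lam}"
proof -
  obtain y where "y \<in> {..<lam}" using assms(2) by (metis ex_in_conv finite.emptyI)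
  then show ?thesis using initial_ord_limit[OF assms] by (intro cof_infinite_if_limit) auto
qed

lemma limit_if_cof_infinite:
  fixes a y :: "'k::wellorder"
  assumes "infinite {..<cof a}" "y < a"
  shows "\<exists>z. y < z \<and> z < a"
proof (rule ccontr)
  assume top: "\<not> ?thesis"
  define z0 :: 'k where "z0 = (LEAST x. True)"
  have z0: "z0 \<le> x" for x unfolding z0_def by (rule Least_le) simp
  define c where "c = (LEAST x. z0 < x)"
  have "z0 < a" using z0 assms(2) by (rule le_less_trans)
  then have "z0 < c" unfolding c_def by (rule LeastI)
  have "{..<c} = {z0}"
  proof (intro set_eqI iffI)
    fix x assume "x \<in> {..<c}"
    then have "\<not> z0 < x" unfolding c_def using not_less_Least by auto
    then show "x \<in> {z0}" using z0[of x] by auto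
  qed (use \<open>z0 < c\<close> in auto)
  have "g \<le> y" if "g < a" for g using top that by (meson leI)
  then have "weakly_cofinal {y} a"
    using assms(2) by (auto simp: weakly_cofinal_def)
  moreover have "{y} \<approx> {..<c}" using \<open>{..<c} = {z0}\<close> by (simp add: singleton_eqpoll)
  ultimately have "cof a \<le> c" by (rule cof_le)
  then have "{..<cof a} \<subseteq> {..<c}" by auto
  then have "finite {..<cof a}" using \<open>{..<c} = {z0}\<close> by (metis finite.emptyI finite_insert finite_subset)
  with assms(1) show False by blast
qed

lemma sup_is_tail:
  fixes a lam :: "'k::wellorder"
  assumes "weakly_cofinal D a" "lam < a"
    and limit: "\<And>y. y < a \<Longrightarrow> \<exists>z. y < z \<and> z < a"
  shows "sup_is {d\<in>D. lam \<le> d} a"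
  unfolding sup_is_def
proof (intro conjI allI impI)
  show "{d\<in>D. lam \<le> d} \<subseteq> {..<a}" using assms(1) by (auto simp: weakly_cofinal_def)
next
  fix g assume "g < a"
  then obtain z where z: "max g lam < z" "z < a" using assms(2) limit by (metis max_less_iff_conj)
  then obtain d where "d \<in> D" "z \<le> d" using assms(1) unfolding weakly_cofinal_def by blast
  with z show "\<exists>x\<in>{d\<in>D. lam \<le> d}. g < x" by (intro bexI[of _ d]) auto
qed

text \<open>At most one point of \<open>X\<close> has index \<open>\<zeta>\<close>, and a set cofinal in the strict sense stays
  cofinal without it.\<close>

lemma cof_le_if_sup_is_index_bounded:
  fixes a \<zeta> \<theta> :: "'k::wellorder"
  assumes D: "weakly_cofinal D a" and \<phi>: "bij_betw \<phi> D {..<\<theta>}" and "\<zeta> < \<theta>"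
    and X: "sup_is X a" "X \<subseteq> D" "\<And>x. x \<in> X \<Longrightarrow> \<phi> x \<le> \<zeta>"
  shows "cof a \<le> \<zeta>"
proof -
  define Y where "Y = {d\<in>D. \<phi> d < \<zeta>}"
  have "\<phi> ` Y = {..<\<zeta>}"
  proof
    show "\<phi> ` Y \<subseteq> {..<\<zeta>}" by (auto simp: Y_def)
    show "{..<\<zeta>} \<subseteq> \<phi> ` Y"
    proof
      fix x assume "x \<in> {..<\<zeta>}"
      then have "x \<in> \<phi> ` D" using \<phi> \<open>\<zeta> < \<theta>\<close> by (auto simp: bij_betw_def)
      with \<open>x \<in> {..<\<zeta>}\<close> show "x \<in> \<phi> ` Y" by (auto simp: Y_def)
    qed
  qed
  then have "bij_betw \<phi> Y {..<\<zeta>}"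
    using \<phi> by (rule bij_betw_subset[rotated 2]) (auto simp: Y_def)
  then have "Y \<approx> {..<\<zeta>}" unfolding eqpoll_def by blast
  moreover have "weakly_cofinal Y a"
    unfolding weakly_cofinal_def
  proof (intro conjI allI impI)
    show "Y \<subseteq> {..<a}" using D unfolding Y_def weakly_cofinal_def by auto
  next
    fix g assume "g < a"
    then obtain x where x: "x \<in> X" "g < x" using X(1) unfolding sup_is_def by blast
    then have "x < a" using X(1) unfolding sup_is_def by blast
    then obtain x' where x': "x' \<in> X" "x < x'" using X(1) unfolding sup_is_def by blast
    have "\<phi> x \<noteq> \<phi> x'"
      using \<phi> x(1) x' X(2) unfolding bij_betw_def inj_on_def by (metis less_irrefl subsetD)
    moreover have "\<phi> x \<le> \<zeta>" "\<phi> x' \<le> \<zeta>" using X(3) x(1) x'(1) by auto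
    ultimately have "\<phi> x < \<zeta> \<or> \<phi> x' < \<zeta>" by auto
    then have "x \<in> Y \<or> x' \<in> Y" using x(1) x'(1) X(2) unfolding Y_def by auto
    moreover have "g \<le> x" "g \<le> x'" using x(2) x'(2) by auto
    ultimately show "\<exists>y\<in>Y. g \<le> y" by blast
  qed
  ultimately show ?thesis by (intro cof_le)
qed

lemma ex_regressive_avoiding:
  fixes lam :: "'k::wellorder"
  assumes "\<And>b. b \<in> B \<Longrightarrow> lam \<le> b \<and> U b \<prec> {..<lam}"
  shows "\<exists>f. regressive_on f a \<and> (\<forall>b\<in>B. f b \<notin> U b)"
proof -
  have "\<exists>y<b. y \<notin> U b" if "b \<in> B" for b
  proof (rule ccontr)
    assume "\<not> ?thesis"
    then have "{..<lam} \<subseteq> U b" using assms[OF that] by force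
    then have "{..<lam} \<prec> {..<lam}" using assms[OF that] by (meson subset_imp_lepoll lesspoll_trans1)
    then show False by simp
  qed
  then obtain g where g: "\<And>b. b \<in> B \<Longrightarrow> g b < b \<and> g b \<notin> U b" by metis
  define z0 :: 'k where "z0 = (LEAST x. True)"
  have z0: "z0 \<le> x" for x unfolding z0_def by (rule Least_le) simp
  define f where "f b = (if b \<in> B then g b else z0)" for b
  have "regressive_on f a"
    unfolding regressive_on_def
  proof (intro allI impI conjI)
    fix b assume "b < a"
    show "f b < a"
      using g[of b] z0[of b] \<open>b < a\<close> by (cases "b \<in> B") (auto simp: f_def)
    assume "\<exists>c. c < b"
    then obtain c where "c < b" by blast
    show "f b < b"
      using g[of b] z0[of c] \<open>c < b\<close> by (cases "b \<in> B") (auto simp: f_def)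
  qed
  then show ?thesis using g unfolding f_def by auto
qed

definition guesses :: "('k::wellorder \<Rightarrow> 'k \<Rightarrow> 'k set) \<Rightarrow> 'k \<Rightarrow> bool" where
  "guesses F a \<longleftrightarrow> (\<forall>f. regressive_on f a \<longrightarrow>
     (\<forall>B. sup_is B a \<longrightarrow> (\<exists>i<a. sup_is {b\<in>B. f b \<in> F i b} a)))"

lemma J_idealE:
  assumes "S \<in> J_ideal chi"
  obtains C F where "club C" "\<And>i b. F i b \<prec> {..<chi}" "\<And>a. a \<in> S \<inter> C \<Longrightarrow> guesses F a"
proof -
  from assms obtain C F where "club C" "\<forall>i b. F i b \<prec> {..<chi}" "\<forall>a\<in>S \<inter> C. guesses F a"
    unfolding J_ideal_def guesses_def by blast
  with that show thesis by blast
qed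

lemma club_Int_greaterThan:
  fixes lam :: "'k::wellorder"
  assumes "club C"
  shows "club (C \<inter> {lam<..})"
  unfolding club_def
proof (intro conjI allI impI)
  fix x
  obtain c where "c \<in> C" "max x lam < c" using assms unfolding club_def by blast
  then show "\<exists>c\<in>C \<inter> {lam<..}. x < c" by auto
next
  fix a assume a: "(\<exists>g. g < a) \<and> (\<forall>b<a. \<exists>c\<in>C \<inter> {lam<..}. b < c \<and> c < a)"
  then have "a \<in> C" using assms unfolding club_def by blast
  moreover from a have "lam < a" by fastforce
  ultimately show "a \<in> C \<inter> {lam<..}" by simp
qed

lemma ex_rank_small_sublevels:
  fixes lam a :: "'k::wellorder"
  assumes "{..<a} \<lesssim> {..<lam}"
  shows "\<exists>r. (\<forall>i<a. r i < cof lam) \<and> (\<forall>\<xi><cof lam. \<exists>\<gamma><lam. {i. i < a \<and> r i < \<xi>} \<lesssim> {..<\<gamma>})"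
proof -
  obtain E \<eta> where E: "weakly_cofinal E lam" and \<eta>: "bij_betw \<eta> {..<cof lam} E"
    using cof_witness[of lam] unfolding eqpoll_def by (metis bij_betw_inv)
  obtain h where h: "inj_on h {..<a}" "h ` {..<a} \<subseteq> {..<lam}"
    using assms unfolding lepoll_def by blast
  define r where "r i = (LEAST \<zeta>. h i \<le> \<eta> \<zeta>)" for i
  have r: "r i < cof lam \<and> h i \<le> \<eta> (r i)" if "i < a" for i
  proof -
    have "h i < lam" using h(2) that by auto
    then obtain e where "e \<in> E" "h i \<le> e" using E unfolding weakly_cofinal_def by blast
    then obtain \<zeta> where "\<zeta> < cof lam" "h i \<le> \<eta> \<zeta>" using \<eta> unfolding bij_betw_def by force
    then show ?thesis unfolding r_def by (meson LeastI Least_le le_less_trans)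
  qed
  have "\<exists>\<gamma><lam. {i. i < a \<and> r i < \<xi>} \<lesssim> {..<\<gamma>}" if "\<xi> < cof lam" for \<xi>
  proof -
    have "inj_on \<eta> {..<\<xi>}" "\<eta> ` {..<\<xi>} \<subseteq> E"
      using \<eta> that unfolding bij_betw_def by (auto intro: inj_on_subset)
    then have "\<eta> ` {..<\<xi>} \<subseteq> {..<lam}" "\<eta> ` {..<\<xi>} \<approx> {..<\<xi>}"
      using E by (auto simp: weakly_cofinal_def inj_on_image_eqpoll_self)
    then have "\<exists>\<gamma><lam. \<forall>x\<in>\<eta> ` {..<\<xi>}. x < \<gamma>"
      using that by (intro bounded_if_eqpoll_less_cof)
    then obtain \<gamma> where "\<gamma> < lam" and \<gamma>: "\<forall>x\<in>\<eta> ` {..<\<xi>}. x < \<gamma>" by blast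
    have "h ` {i. i < a \<and> r i < \<xi>} \<subseteq> {..<\<gamma>}"
      using \<gamma> r by (fastforce intro: le_less_trans)
    moreover have "inj_on h {i. i < a \<and> r i < \<xi>}"
      using h(1) by (rule inj_on_subset) auto
    ultimately show ?thesis using \<open>\<gamma> < lam\<close> unfolding lepoll_def by blast
  qed
  with r show ?thesis by blast
qed

lemma not_guesses_if_rank_small_sublevels:
  fixes lam chi a :: "'k::wellorder"
  assumes lam: "initial_ord lam" "infinite {..<lam}" and "chi < lam"
    and F: "\<And>i b. F i b \<prec> {..<chi}"
    and a: "lam < a" "infinite {..<cof a}"
    and r: "\<And>i. i < a \<Longrightarrow> r i < cof a"
      "\<And>\<xi>. \<xi> < cof a \<Longrightarrow> \<exists>\<gamma><lam. {i. i < a \<and> r i < \<xi>} \<lesssim> {..<\<gamma>}"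
  shows "\<not> guesses F a"
proof
  assume guessing: "guesses F a"
  obtain D \<phi> where D: "weakly_cofinal D a" and \<phi>: "bij_betw \<phi> D {..<cof a}"
    using cof_witness[of a] unfolding eqpoll_def by blast
  define U where "U b = (\<Union>i\<in>{i. i < a \<and> r i < \<phi> b}. F i b)" for b
  have U_small: "U b \<prec> {..<lam}" if "b \<in> D" for b
  proof -
    have "\<phi> b < cof a" using \<phi> that by (auto simp: bij_betw_def)
    then obtain \<gamma> where "\<gamma> < lam" and sublevel: "{i. i < a \<and> r i < \<phi> b} \<lesssim> {..<\<gamma>}"
      using r(2) by blast
    from sublevel have "{i. i < a \<and> r i < \<phi> b} \<lesssim> {..<max \<gamma> chi}"
      by (rule lepoll_trans[OF _ subset_imp_lepoll]) auto
    moreover have "F i b \<lesssim> {..<max \<gamma> chi}" for i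
      using F[of i b] by (rule lepoll_trans[OF lesspoll_imp_lepoll subset_imp_lepoll]) auto
    moreover have "max \<gamma> chi < lam" using \<open>\<gamma> < lam\<close> \<open>chi < lam\<close> by simp
    ultimately show ?thesis
      unfolding U_def using lam by (intro UN_lesspoll_initial_ord) auto
  qed
  define B where "B = {d\<in>D. lam \<le> d}"
  obtain f where f: "regressive_on f a" "\<And>b. b \<in> B \<Longrightarrow> f b \<notin> U b"
    using ex_regressive_avoiding[of B lam U a] U_small unfolding B_def by auto
  have "sup_is B a"
    unfolding B_def using D a by (intro sup_is_tail limit_if_cof_infinite)
  then obtain i where "i < a" and X: "sup_is {b\<in>B. f b \<in> F i b} a"
    using guessing f(1) unfolding guesses_def by blast
  have "\<phi> b \<le> r i" if "b \<in> B" "f b \<in> F i b" for b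
  proof (rule ccontr)
    assume "\<not> \<phi> b \<le> r i"
    then have "f b \<in> U b" using \<open>i < a\<close> that(2) unfolding U_def by (auto simp: not_le)
    with f(2) that(1) show False by blast
  qed
  then have "cof a \<le> r i"
    using D \<phi> r(1)[OF \<open>i < a\<close>] X by (intro cof_le_if_sup_is_index_bounded) (auto simp: B_def)
  with r(1)[OF \<open>i < a\<close>] show False by simp
qed

theorem proposition3p3:
  fixes lam chi :: "'k::wellorder"
  assumes lam_card: "initial_ord lam" and lam_inf: "infinite {..<lam}"
    and succ1: "\<forall>x::'k. {..<x} \<lesssim> {..<lam}"
    and succ2: "\<not> (UNIV :: 'k set) \<lesssim> {..<lam}"
    and chi: "(finite {..<chi} \<and> card {..<chi} = 2) \<or> (infinite {..<chi} \<and> initial_ord chi)"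
    and chi_lt: "chi < lam"
    and S: "S \<in> J_ideal chi"
  shows "\<not> stationary (S \<inter> E_cof (cof lam))"
proof -
  obtain C and F :: "'k \<Rightarrow> 'k \<Rightarrow> 'k set" where C: "club C" and F: "\<And>i b. F i b \<prec> {..<chi}"
    and guessing: "\<And>a. a \<in> S \<inter> C \<Longrightarrow> guesses F a"
    using J_idealE[OF S] by blast
  have "S \<inter> E_cof (cof lam) \<inter> (C \<inter> {lam<..}) = {}"
  proof (rule equals0I)
    fix a assume a: "a \<in> S \<inter> E_cof (cof lam) \<inter> (C \<inter> {lam<..})"
    then have "cof a = cof lam" "lam < a" by (auto simp: E_cof_def)
    obtain r where "\<forall>i<a. r i < cof a" "\<forall>\<xi><cof a. \<exists>\<gamma><lam. {i. i < a \<and> r i < \<xi>} \<lesssim> {..<\<gamma>}"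
      using ex_rank_small_sublevels[OF succ1[rule_format, of a]] \<open>cof a = cof lam\<close> by auto
    moreover have "infinite {..<cof a}"
      using \<open>cof a = cof lam\<close> lam_card lam_inf by (simp add: infinite_cof_initial_ord)
    ultimately have "\<not> guesses F a"
      using \<open>lam < a\<close> lam_card lam_inf chi_lt F
      by (intro not_guesses_if_rank_small_sublevels[where F = F and r = r]) auto
    moreover have "guesses F a" using guessing a by blast
    ultimately show False by blast
  qed
  then show ?thesis
    using club_Int_greaterThan[OF C] unfolding stationary_def by blast
qed

end
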